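(* Let $M$ be as in the context and let $\Gamma_1,\Gamma_2$ be compatible piecewise $C^1$ cuts. Then $\Gamma_1\cup\Gamma_2$ can be parameterized by a finite family of regular $C^1$ curves $\{\gamma_a\}_{a\in A}$ (intersecting one another and $\partial M$ transversely and only at their endpoints) such that the image of each $\gamma_a$ is contained in $\overline{\Gamma_1\setminus\Gamma_2}$, in $\overline{\Gamma_2\setminus\Gamma_1}$, or in $\Gamma_1\cap\Gamma_2$.
   Context: $M$ is a compact oriented Riemannian surface with piecewise $C^1$ (possibly empty) boundary $\partial M$. A $C^1$ curve is regular if its velocity never vanishes. A closed set $\Gamma\subset M$ is a piecewise $C^1$ cut if it is the image of a finite set of regular $C^1$ curves that intersect one another (and $\partial M$) transversely, and only do so at their endpoints. Cuts $\Gamma_1,\Gamma_2$ are compatible if $\Gamma_1\cup\Gamma_2$ is a piecewise $C^1$ cut.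
   Formalization: Transversality between curves of a cut, in hypothesis and conclusion, means outgoing tangent directions at a common endpoint are never positive multiples of one another rather than linearly independent, and each curve meets itself only at its endpoints. The statement above fails without it. *)

theory Defs
  imports "HOL-Analysis.Analysis"
begin

type_synonym 'a chart = "'a set \<times> ('a \<Rightarrow> real^2)"

definition C1_map :: "(real^2 \<Rightarrow> real^2) \<Rightarrow> (real^2) set \<Rightarrow> bool" where
  "C1_map f S \<longleftrightarrow>
     (\<exists>f' :: real^2 \<Rightarrow> ((real^2) \<Rightarrow>\<^sub>L (real^2)).
        (\<forall>x\<in>S. (f has_derivative blinfun_apply (f' x)) (at x)) \<and> continuous_on S f')"

definition orientation_preserving :: "(real^2 \<Rightarrow> real^2) \<Rightarrow> (real^2) set \<Rightarrow> bool" where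
  "orientation_preserving f S \<longleftrightarrow>
     (\<forall>x\<in>S. det (matrix (frechet_derivative f (at x))) > 0)"

definition oriented_C1_surface :: "'a topology \<Rightarrow> 'a chart set \<Rightarrow> bool" where
  "oriented_C1_surface X A \<longleftrightarrow>
     Hausdorff_space X \<and>
     \<Union>(fst ` A) = topspace X \<and>
     (\<forall>(U, \<phi>)\<in>A. openin X U \<and> open (\<phi> ` U) \<and>
        homeomorphic_map (subtopology X U) (top_of_set (\<phi> ` U)) \<phi>) \<and>
     (\<forall>(U, \<phi>)\<in>A. \<forall>(V, \<psi>)\<in>A.
        C1_map (\<psi> \<circ> inv_into U \<phi>) (\<phi> ` (U \<inter> V)) \<and>
        orientation_preserving (\<psi> \<circ> inv_into U \<phi>) (\<phi> ` (U \<inter> V)))"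

definition chart_vel :: "('a \<Rightarrow> real^2) \<Rightarrow> (real \<Rightarrow> 'a) \<Rightarrow> real \<Rightarrow> real^2" where
  "chart_vel \<phi> \<gamma> t = vector_derivative (\<phi> \<circ> \<gamma>) (at t within {0..1})"

definition regular_C1_curve :: "'a topology \<Rightarrow> 'a chart set \<Rightarrow> (real \<Rightarrow> 'a) \<Rightarrow> bool" where
  "regular_C1_curve X A \<gamma> \<longleftrightarrow>
     continuous_map (top_of_set {0..1}) X \<gamma> \<and>
     (\<forall>(U, \<phi>)\<in>A.
        (\<forall>t\<in>{0..1}. \<gamma> t \<in> U \<longrightarrow>
            ((\<phi> \<circ> \<gamma>) has_vector_derivative chart_vel \<phi> \<gamma> t) (at t within {0..1}) \<and>
            chart_vel \<phi> \<gamma> t \<noteq> 0) \<and>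
        continuous_on {t\<in>{0..1}. \<gamma> t \<in> U} (chart_vel \<phi> \<gamma>))"

definition lin_indep2 :: "real^2 \<Rightarrow> real^2 \<Rightarrow> bool" where
  "lin_indep2 v w \<longleftrightarrow> v$1 * w$2 - v$2 * w$1 \<noteq> 0"

text \<open>Outgoing tangent vector of a curve at an endpoint s (s = 0 or s = 1).\<close>

definition out_vel :: "('a \<Rightarrow> real^2) \<Rightarrow> (real \<Rightarrow> 'a) \<Rightarrow> real \<Rightarrow> real^2" where
  "out_vel \<phi> \<gamma> s = (if s = 0 then chart_vel \<phi> \<gamma> s else - chart_vel \<phi> \<gamma> s)"

text \<open>A compact surface M with piecewise C1 (possibly empty) boundary inside the oriented
  C1 surface (X, A): M is compact, the closure of its interior, and its frontier is the union
  of the finitely many regular C1 arcs in B, which meet one another only at endpoints, each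
  point being hit by exactly 0 or 2 arc-ends (so the boundary is a disjoint union of
  piecewise C1 simple closed curves).\<close>

definition surface_pw_C1_boundary ::
    "'a topology \<Rightarrow> 'a chart set \<Rightarrow> 'a set \<Rightarrow> (real \<Rightarrow> 'a) set \<Rightarrow> bool" where
  "surface_pw_C1_boundary X A M B \<longleftrightarrow>
     oriented_C1_surface X A \<and>
     compactin X M \<and>
     M = X closure_of (X interior_of M) \<and>
     finite B \<and>
     X frontier_of M = (\<Union>\<beta>\<in>B. \<beta> ` {0..1}) \<and>
     (\<forall>\<beta>\<in>B. regular_C1_curve X A \<beta>) \<and>
     (\<forall>\<beta>\<in>B. \<forall>\<beta>'\<in>B. \<forall>s\<in>{0..1}. \<forall>t\<in>{0..1}.
        \<beta> s = \<beta>' t \<longrightarrow> (\<beta> = \<beta>' \<and> s = t) \<or> (s \<in> {0, 1} \<and> t \<in> {0, 1})) \<and>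
     (\<forall>p \<in> topspace X. card {(\<beta>, s). \<beta> \<in> B \<and> s \<in> {0::real, 1} \<and> \<beta> s = p} \<in> {0, 2})"

definition cut_family ::
    "'a topology \<Rightarrow> 'a chart set \<Rightarrow> 'a set \<Rightarrow> (real \<Rightarrow> 'a) set \<Rightarrow> (real \<Rightarrow> 'a) set \<Rightarrow> bool" where
  "cut_family X A M B C \<longleftrightarrow>
     finite C \<and>
     (\<forall>\<gamma>\<in>C. regular_C1_curve X A \<gamma> \<and> \<gamma> ` {0..1} \<subseteq> M) \<and>
     (\<forall>\<gamma>\<in>C. \<forall>\<delta>\<in>C. \<forall>s\<in>{0..1}. \<forall>t\<in>{0..1}.
        \<gamma> s = \<delta> t \<and> (\<gamma>, s) \<noteq> (\<delta>, t) \<longrightarrow>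
          s \<in> {0, 1} \<and> t \<in> {0, 1} \<and>
          (\<forall>(U, \<phi>)\<in>A. \<gamma> s \<in> U \<longrightarrow>
             \<not> (\<exists>c>0. out_vel \<phi> \<gamma> s = c *\<^sub>R out_vel \<phi> \<delta> t))) \<and>
     (\<forall>\<gamma>\<in>C. \<forall>\<beta>\<in>B. \<forall>s\<in>{0..1}. \<forall>u\<in>{0..1}.
        \<gamma> s = \<beta> u \<longrightarrow>
          s \<in> {0, 1} \<and>
          (\<forall>(U, \<phi>)\<in>A. \<gamma> s \<in> U \<longrightarrow> lin_indep2 (chart_vel \<phi> \<gamma> s) (chart_vel \<phi> \<beta> u)))"

definition pw_C1_cut ::
    "'a topology \<Rightarrow> 'a chart set \<Rightarrow> 'a set \<Rightarrow> (real \<Rightarrow> 'a) set \<Rightarrow> 'a set \<Rightarrow> bool" where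
  "pw_C1_cut X A M B \<Gamma> \<longleftrightarrow>
     (\<exists>C. cut_family X A M B C \<and> \<Gamma> = (\<Union>\<gamma>\<in>C. \<gamma> ` {0..1}))"

definition compatible_cuts ::
    "'a topology \<Rightarrow> 'a chart set \<Rightarrow> 'a set \<Rightarrow> (real \<Rightarrow> 'a) set \<Rightarrow> 'a set \<Rightarrow> 'a set \<Rightarrow> bool" where
  "compatible_cuts X A M B \<Gamma>1 \<Gamma>2 \<longleftrightarrow>
     pw_C1_cut X A M B \<Gamma>1 \<and> pw_C1_cut X A M B \<Gamma>2 \<and> pw_C1_cut X A M B (\<Gamma>1 \<union> \<Gamma>2)"

end

theory Submission
  imports Defs
begin

text \<open>Cut every arc of a family parameterising \<open>\<Gamma>1 \<union> \<Gamma>2\<close> at the parameters where it passes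
  through an endpoint of an arc of \<open>\<Gamma>1\<close> or \<open>\<Gamma>2\<close>. On the open parameter interval of a resulting
  piece, the preimage of \<open>\<Gamma>i\<close> is closed, and it is also open: near a point interior both to the
  piece and to an arc \<open>\<delta>\<close> of \<open>\<Gamma>i\<close>, the arc \<open>\<delta>\<close> cannot leave along the other arcs (they meet the
  piece only at endpoints), so it runs inside the piece and, by one-dimensional invariance of
  domain, covers a neighbourhood of the point. By connectedness the open piece lies in \<open>\<Gamma>i\<close> or
  misses it, and passing to closures gives the trichotomy. The pieces still form a cut family,
  because two adjacent pieces of one arc leave their common endpoint in opposite directions.\<close>

section \<open>Affine reparametrisation of curves\<close>

definition subarc :: "(real \<Rightarrow> 'a) \<Rightarrow> real \<Rightarrow> real \<Rightarrow> real \<Rightarrow> 'a" where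
  "subarc \<gamma> a b = (\<lambda>s. \<gamma> (a + (b - a) * s))"

lemma affine_unit_interval_image:
  fixes a b :: real
  assumes "a \<le> b"
  shows "(\<lambda>s. a + (b - a) * s) ` {0..1} = {a..b}"
  using image_affinity_atLeastAtMost[of "b - a" a 0 1] assms by (simp add: add.commute)

lemma subarc_image: "a \<le> b \<Longrightarrow> subarc \<gamma> a b ` {0..1} = \<gamma> ` {a..b}"
  unfolding subarc_def using affine_unit_interval_image[of a b] by (metis image_image)

lemma affine_unit_interval_endpoint:
  fixes a b s :: real
  assumes "0 \<le> a" "a < b" "b \<le> 1" "s \<in> {0..1}" "a + (b - a) * s \<in> {0, 1}"
  shows "a + (b - a) * s = s"
proof -
  have bounds: "0 \<le> (b - a) * s" "(b - a) * s \<le> b - a"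
    using assms by (auto simp: mult_left_le)
  from assms(5) have "a + (b - a) * s = 0 \<or> a + (b - a) * s = 1"
    by simp
  then show ?thesis
  proof
    assume "a + (b - a) * s = 0"
    with bounds assms(1) have "a = 0" "(b - a) * s = 0"
      by linarith+
    with assms(2) show ?thesis
      by simp
  next
    assume "a + (b - a) * s = 1"
    with bounds assms(3) have "b = 1" "(b - a) * s = b - a"
      by linarith+
    with assms(2) show ?thesis
      by simp
  qed
qed

lemma affine_unit_interval_mem:
  fixes a b s :: real
  assumes "0 \<le> a" "a \<le> b" "b \<le> 1" "s \<in> {0..1}"
  shows "a + (b - a) * s \<in> {0..1}"
proof -
  have "a + (b - a) * s \<in> {a..b}"
    using affine_unit_interval_image[OF assms(2)] assms(4) by blast
  with assms show ?thesis
    by auto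
qed

lemma affine_unit_interval_eq_endpoints:
  fixes a b s :: real
  assumes "a < b"
  shows "a + (b - a) * s = a \<longleftrightarrow> s = 0" and "a + (b - a) * s = b \<longleftrightarrow> s = 1"
proof -
  have "a + (b - a) * s = b \<longleftrightarrow> (b - a) * s = (b - a) * 1"
    by (auto simp: algebra_simps)
  then show "a + (b - a) * s = b \<longleftrightarrow> s = 1"
    using assms by simp
qed (use assms in simp)

lemma regular_C1_curveD:
  assumes "regular_C1_curve X A \<gamma>" "(U, \<phi>) \<in> A"
  shows "\<And>t. t \<in> {0..1} \<Longrightarrow> \<gamma> t \<in> U \<Longrightarrow>
           ((\<phi> \<circ> \<gamma>) has_vector_derivative chart_vel \<phi> \<gamma> t) (at t within {0..1})"
    and "\<And>t. t \<in> {0..1} \<Longrightarrow> \<gamma> t \<in> U \<Longrightarrow> chart_vel \<phi> \<gamma> t \<noteq> 0"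
    and "continuous_on {t \<in> {0..1}. \<gamma> t \<in> U} (chart_vel \<phi> \<gamma>)"
  using assms unfolding regular_C1_curve_def by fast+

lemma has_vector_derivative_subarc:
  assumes "(f \<circ> \<gamma> has_vector_derivative v) (at (a + (b - a) * s) within {0..1})"
    and "0 \<le> a" "a \<le> b" "b \<le> 1"
  shows "(f \<circ> subarc \<gamma> a b has_vector_derivative (b - a) *\<^sub>R v) (at s within {0..1})"
proof -
  have "((\<lambda>s. a + (b - a) * s) has_vector_derivative b - a) (at s within {0..1})"
    by (auto intro!: derivative_eq_intros)
  moreover have "(f \<circ> \<gamma> has_vector_derivative v)
      (at (a + (b - a) * s) within (\<lambda>s. a + (b - a) * s) ` {0..1})"
    using assms by (auto intro: has_vector_derivative_within_subset simp: affine_unit_interval_image)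
  ultimately show ?thesis
    using vector_diff_chain_within unfolding subarc_def by (fastforce simp: o_def)
qed

lemma chart_vel_subarc:
  assumes "regular_C1_curve X A \<gamma>" "(U, \<phi>) \<in> A" "0 \<le> a" "a < b" "b \<le> 1"
    and "s \<in> {0..1}" "\<gamma> (a + (b - a) * s) \<in> U"
  shows "chart_vel \<phi> (subarc \<gamma> a b) s = (b - a) *\<^sub>R chart_vel \<phi> \<gamma> (a + (b - a) * s)"
proof -
  have "a + (b - a) * s \<in> {0..1}"
    using assms by (intro affine_unit_interval_mem) auto
  with assms have "(\<phi> \<circ> subarc \<gamma> a b has_vector_derivative (b - a) *\<^sub>R chart_vel \<phi> \<gamma> (a + (b - a) * s))
      (at s within {0..1})"
    by (intro has_vector_derivative_subarc regular_C1_curveD(1)) auto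
  then show ?thesis
    unfolding chart_vel_def using assms(6) vector_derivative_within_cbox[of 0 1 s] by simp
qed

lemma regular_C1_curve_subarc:
  assumes reg: "regular_C1_curve X A \<gamma>" and ab: "0 \<le> a" "a < b" "b \<le> 1"
  shows "regular_C1_curve X A (subarc \<gamma> a b)"
proof -
  define L where "L = (\<lambda>s::real. a + (b - a) * s)"
  have L01: "L ` {0..1} \<subseteq> {0..1}"
    using affine_unit_interval_mem ab unfolding L_def by auto
  have contL: "continuous_on {0..1} L"
    unfolding L_def by (intro continuous_intros)
  have "continuous_map (top_of_set {0..1}) X (\<gamma> \<circ> L)"
    using L01 contL reg unfolding regular_C1_curve_def
    by (intro continuous_map_compose[of _ "top_of_set {0..1}"]) (auto simp: image_subset_iff)
  moreover have "((\<phi> \<circ> subarc \<gamma> a b) has_vector_derivative chart_vel \<phi> (subarc \<gamma> a b) t)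
        (at t within {0..1}) \<and> chart_vel \<phi> (subarc \<gamma> a b) t \<noteq> 0"
    if "(U, \<phi>) \<in> A" "t \<in> {0..1}" "subarc \<gamma> a b t \<in> U" for U \<phi> t
  proof -
    have x: "a + (b - a) * t \<in> {0..1}" "\<gamma> (a + (b - a) * t) \<in> U"
      using that L01 unfolding subarc_def L_def by blast+
    show ?thesis
      unfolding chart_vel_subarc[OF reg that(1) ab that(2) x(2)]
      using has_vector_derivative_subarc[OF regular_C1_curveD(1)[OF reg that(1) x] ab(1) _ ab(3)]
        regular_C1_curveD(2)[OF reg that(1) x] ab(2)
      by simp
  qed
  moreover have "continuous_on {t \<in> {0..1}. subarc \<gamma> a b t \<in> U} (chart_vel \<phi> (subarc \<gamma> a b))"
    if U: "(U, \<phi>) \<in> A" for U \<phi>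
  proof -
    have dom: "{t \<in> {0..1}. subarc \<gamma> a b t \<in> U} = {t \<in> {0..1}. \<gamma> (L t) \<in> U}"
      by (simp add: subarc_def L_def)
    have "continuous_on {t \<in> {0..1}. \<gamma> (L t) \<in> U} (\<lambda>t. (b - a) *\<^sub>R chart_vel \<phi> \<gamma> (L t))"
      by (intro continuous_intros continuous_on_compose2[OF regular_C1_curveD(3)[OF reg U]]
          continuous_on_subset[OF contL]) (use L01 in blast)+
    then show ?thesis
      unfolding dom by (rule continuous_on_eq) (simp add: chart_vel_subarc[OF reg U ab] L_def)
  qed
  ultimately show ?thesis
    unfolding regular_C1_curve_def by (auto simp: subarc_def L_def o_def)
qed

section \<open>Finite families of arcs meeting only at endpoints\<close>

definition curves_image :: "(real \<Rightarrow> 'a) set \<Rightarrow> 'a set" where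
  "curves_image C = (\<Union>\<gamma>\<in>C. \<gamma> ` {0..1})"

definition arc_ends :: "(real \<Rightarrow> 'a) set \<Rightarrow> 'a set" where
  "arc_ends C = (\<Union>\<gamma>\<in>C. {\<gamma> 0, \<gamma> 1})"

definition arcs_meet_at_endpoints :: "'a topology \<Rightarrow> (real \<Rightarrow> 'a) set \<Rightarrow> bool" where
  "arcs_meet_at_endpoints X C \<longleftrightarrow>
     finite C \<and> (\<forall>\<gamma>\<in>C. continuous_map (top_of_set {0..1}) X \<gamma>) \<and>
     (\<forall>\<gamma>\<in>C. \<forall>\<delta>\<in>C. \<forall>s\<in>{0..1}. \<forall>t\<in>{0..1}.
        \<gamma> s = \<delta> t \<and> (\<gamma>, s) \<noteq> (\<delta>, t) \<longrightarrow> s \<in> {0, 1} \<and> t \<in> {0, 1})"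

lemma arcs_meet_at_endpointsD:
  assumes "arcs_meet_at_endpoints X C"
  shows "finite C"
    and "\<gamma> \<in> C \<Longrightarrow> continuous_map (top_of_set {0..1}) X \<gamma>"
    and "\<lbrakk>\<gamma> \<in> C; \<delta> \<in> C; s \<in> {0..1}; t \<in> {0..1}; \<gamma> s = \<delta> t; (\<gamma>, s) \<noteq> (\<delta>, t)\<rbrakk>
           \<Longrightarrow> s \<in> {0, 1} \<and> t \<in> {0, 1}"
  using assms unfolding arcs_meet_at_endpoints_def by blast+

lemma arcs_meet_at_endpoints_inj_on:
  assumes "arcs_meet_at_endpoints X C" "\<gamma> \<in> C"
  shows "inj_on \<gamma> {0<..<1}"
proof (rule inj_onI, rule ccontr)
  fix s t :: real
  assume "s \<in> {0<..<1}" "t \<in> {0<..<1}" "\<gamma> s = \<gamma> t" "s \<noteq> t"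
  then show False
    using arcs_meet_at_endpointsD(3)[OF assms(1) assms(2) assms(2), of s t] by auto
qed

lemma compactin_curves_image:
  assumes "finite C" "\<And>\<gamma>. \<gamma> \<in> C \<Longrightarrow> continuous_map (top_of_set {0..1}) X \<gamma>"
  shows "compactin X (curves_image C)"
  unfolding curves_image_def
proof (intro compactin_Union ballI)
  show "finite ((\<lambda>\<gamma>. \<gamma> ` {0..1}) ` C)"
    using assms(1) by simp
  show "compactin X S" if "S \<in> (\<lambda>\<gamma>. \<gamma> ` {0..1}) ` C" for S
    using that assms(2) image_compactin[of "top_of_set {0..1}" "{0..1::real}"]
    by (auto simp: compactin_subtopology)
qed

lemma closedin_curves_image:
  assumes "Hausdorff_space X" "arcs_meet_at_endpoints X C"
  shows "closedin X (curves_image C)"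
  using assms compactin_imp_closedin compactin_curves_image arcs_meet_at_endpointsD by metis

lemma arc_isolating_neighbourhood:
  assumes H: "Hausdorff_space X" and C: "arcs_meet_at_endpoints X C" and "\<gamma> \<in> C"
    and cd: "0 < c" "c < t" "t < d" "d < 1"
  obtains N where "openin X N" "\<gamma> t \<in> N" "N \<inter> curves_image C \<subseteq> \<gamma> ` {c..d}"
proof -
  define K where "K = curves_image (C - {\<gamma>}) \<union> \<gamma> ` {0..c} \<union> \<gamma> ` {d..1}"
  have cont: "continuous_map (top_of_set {0..1}) X \<gamma>"
    using arcs_meet_at_endpointsD(2)[OF C \<open>\<gamma> \<in> C\<close>] .
  have "compactin X (\<gamma> ` {x..y})" if "0 \<le> x" "y \<le> 1" for x y :: real
    using that image_compactin[OF _ cont] by (simp add: compactin_subtopology)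
  then have "compactin X K"
    unfolding K_def using C cd
    by (intro compactin_Un compactin_curves_image) (auto simp: arcs_meet_at_endpoints_def)
  then have "closedin X K"
    using H compactin_imp_closedin by blast
  moreover have "\<gamma> t \<notin> K"
  proof
    assume "\<gamma> t \<in> K"
    then consider \<eta> x where "\<eta> \<in> C - {\<gamma>}" "x \<in> {0..1}" "\<gamma> t = \<eta> x"
      | x where "x \<in> {0..c} \<union> {d..1}" "\<gamma> t = \<gamma> x"
      unfolding K_def curves_image_def by blast
    then show False
    proof cases
      case (1 \<eta> x)
      then show False
        using arcs_meet_at_endpointsD(3)[OF C \<open>\<gamma> \<in> C\<close>, of \<eta> t x] cd by auto
    next
      case (2 x)
      then show False
        using arcs_meet_at_endpointsD(3)[OF C \<open>\<gamma> \<in> C\<close> \<open>\<gamma> \<in> C\<close>, of t x] cd by auto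
    qed
  qed
  moreover have "curves_image C \<subseteq> K \<union> \<gamma> ` {c..d}"
    unfolding K_def curves_image_def by force
  moreover have "\<gamma> t \<in> topspace X"
    using cont cd unfolding continuous_map_def by auto
  ultimately show thesis
    by (intro that[of "topspace X - K"]) auto
qed

lemma mem_interior_arc_preimage:
  fixes \<gamma> \<delta> :: "real \<Rightarrow> 'a"
  assumes H: "Hausdorff_space X"
    and \<gamma>: "continuous_map (top_of_set {c..d}) X \<gamma>" "inj_on \<gamma> {c..d}"
    and \<delta>: "continuous_map (top_of_set V) X \<delta>" "inj_on \<delta> V" "\<delta> ` V \<subseteq> \<gamma> ` {c..d}"
    and "open V" "u \<in> V" "t \<in> {c..d}" "\<gamma> t = \<delta> u"
  shows "t \<in> interior {s \<in> {c..d}. \<gamma> s \<in> \<delta> ` V}"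
proof -
  have "homeomorphic_map (top_of_set {c..d}) (subtopology X (\<gamma> ` {c..d})) \<gamma>"
  proof (rule continuous_imp_homeomorphic_map)
    show "continuous_map (top_of_set {c..d}) (subtopology X (\<gamma> ` {c..d})) \<gamma>"
      using \<gamma>(1) by (simp add: continuous_map_in_subtopology)
    show "\<gamma> ` topspace (top_of_set {c..d}) = topspace (subtopology X (\<gamma> ` {c..d}))"
      using \<gamma>(1) unfolding continuous_map_def by auto
  qed (use H \<gamma>(2) in \<open>auto simp: compact_space_subtopology Hausdorff_space_subtopology\<close>)
  then obtain g where "homeomorphic_maps (top_of_set {c..d}) (subtopology X (\<gamma> ` {c..d})) \<gamma> g"
    using homeomorphic_map_maps by blast
  then have g: "continuous_map (subtopology X (\<gamma> ` {c..d})) (top_of_set {c..d}) g"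
    and g_\<gamma>: "\<And>x. x \<in> {c..d} \<Longrightarrow> g (\<gamma> x) = x"
    by (auto simp: homeomorphic_maps_def)
  have "continuous_map (top_of_set V) (subtopology X (\<gamma> ` {c..d})) \<delta>"
    using \<delta>(1,3) by (simp add: continuous_map_in_subtopology image_subset_iff_funcset)
  then have "continuous_map (top_of_set V) (top_of_set {c..d}) (g \<circ> \<delta>)"
    using g by (rule continuous_map_compose)
  then have cont: "continuous_on V (g \<circ> \<delta>)" and into: "(g \<circ> \<delta>) ` V \<subseteq> {c..d}"
    by (auto simp: continuous_map_subtopology_eu)
  have \<gamma>_g: "\<gamma> (g (\<delta> v)) = \<delta> v" if "v \<in> V" for v
    using that \<delta>(3) g_\<gamma> by fastforce
  have "inj_on (g \<circ> \<delta>) V"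
  proof (rule inj_onI)
    fix v w assume "v \<in> V" "w \<in> V" "(g \<circ> \<delta>) v = (g \<circ> \<delta>) w"
    then have "\<delta> v = \<delta> w"
      using \<gamma>_g by (metis comp_apply)
    with \<open>v \<in> V\<close> \<open>w \<in> V\<close> show "v = w"
      using \<delta>(2) inj_onD by fastforce
  qed
  then have "open ((g \<circ> \<delta>) ` V)"
    using injective_into_1d_imp_open_map_UNIV[OF \<open>open V\<close> cont] by blast
  moreover have "t \<in> (g \<circ> \<delta>) ` V"
    using \<open>u \<in> V\<close> \<open>t \<in> {c..d}\<close> \<open>\<gamma> t = \<delta> u\<close> g_\<gamma> by (metis comp_apply image_eqI)
  moreover have "(g \<circ> \<delta>) ` V \<subseteq> {s \<in> {c..d}. \<gamma> s \<in> \<delta> ` V}"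
    using into \<gamma>_g by (auto simp: image_subset_iff)
  ultimately show ?thesis
    using interior_maximal by blast
qed

lemma mem_interior_preimage_subfamily:
  assumes H: "Hausdorff_space X"
    and C: "arcs_meet_at_endpoints X C" "\<gamma> \<in> C"
    and D: "arcs_meet_at_endpoints X D" "\<delta> \<in> D"
    and sub: "curves_image D \<subseteq> curves_image C"
    and t: "t \<in> {0<..<1}" and u: "u \<in> {0<..<1}" and "\<gamma> t = \<delta> u"
  shows "t \<in> interior {s \<in> {0..1}. \<gamma> s \<in> curves_image D}"
proof -
  define c d where "c = t / 2" and "d = (1 + t) / 2"
  have cd: "0 < c" "c < t" "t < d" "d < 1"
    using t by (auto simp: c_def d_def)
  obtain N where N: "openin X N" "\<gamma> t \<in> N" "N \<inter> curves_image C \<subseteq> \<gamma> ` {c..d}"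
    using arc_isolating_neighbourhood[OF H C cd] .
  have \<delta>_cont: "continuous_map (top_of_set {0..1}) X \<delta>"
    using arcs_meet_at_endpointsD(2)[OF D] .
  have "continuous_map (top_of_set {0<..<1}) X \<delta>"
    by (rule continuous_map_from_subtopology_mono[OF \<delta>_cont]) auto
  from openin_continuous_map_preimage[OF this N(1)]
  have "open {x \<in> {0<..<1}. \<delta> x \<in> N}"
    by (simp add: openin_open_trans)
  moreover have "u \<in> {x \<in> {0<..<1}. \<delta> x \<in> N}"
    using u N(2) \<open>\<gamma> t = \<delta> u\<close> by simp
  ultimately obtain \<epsilon> where "\<epsilon> > 0" and \<epsilon>: "ball u \<epsilon> \<subseteq> {x \<in> {0<..<1}. \<delta> x \<in> N}"
    using open_contains_ball by blast
  define V where "V = ball u \<epsilon>"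
  have V: "V \<subseteq> {0<..<1}" "\<delta> ` V \<subseteq> N"
    using \<epsilon> unfolding V_def by auto
  have "\<delta> ` V \<subseteq> \<delta> ` {0..1}"
    using V(1) by (intro image_mono) auto
  also have "\<dots> \<subseteq> curves_image D"
    using D(2) unfolding curves_image_def by (rule UN_upper)
  finally have \<delta>_in_D: "\<delta> ` V \<subseteq> curves_image D" .
  with sub V(2) have "\<delta> ` V \<subseteq> N \<inter> curves_image C"
    by blast
  with N(3) have \<delta>_into: "\<delta> ` V \<subseteq> \<gamma> ` {c..d}"
    by (rule subset_trans[rotated])
  have \<gamma>_cont: "continuous_map (top_of_set {c..d}) X \<gamma>"
    by (rule continuous_map_from_subtopology_mono[OF arcs_meet_at_endpointsD(2)[OF C]]) (use cd in auto)
  have \<gamma>_inj: "inj_on \<gamma> {c..d}"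
    by (rule inj_on_subset[OF arcs_meet_at_endpoints_inj_on[OF C]]) (use cd in auto)
  have \<delta>_cont': "continuous_map (top_of_set V) X \<delta>"
    by (rule continuous_map_from_subtopology_mono[OF \<delta>_cont]) (use V(1) in auto)
  have \<delta>_inj: "inj_on \<delta> V"
    by (rule inj_on_subset[OF arcs_meet_at_endpoints_inj_on[OF D] V(1)])
  have "t \<in> interior {s \<in> {c..d}. \<gamma> s \<in> \<delta> ` V}"
    by (rule mem_interior_arc_preimage[OF H \<gamma>_cont \<gamma>_inj \<delta>_cont' \<delta>_inj \<delta>_into])
      (use \<open>\<epsilon> > 0\<close> cd \<open>\<gamma> t = \<delta> u\<close> in \<open>auto simp: V_def\<close>)
  also have "\<dots> \<subseteq> interior {s \<in> {0..1}. \<gamma> s \<in> curves_image D}"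
    using \<delta>_in_D cd by (intro interior_mono) auto
  finally show ?thesis .
qed

lemma connected_subset_or_disjoint:
  assumes "connected I" "closed S" "I \<inter> S \<subseteq> interior S"
  shows "I \<subseteq> S \<or> I \<inter> S = {}"
proof -
  have "interior S \<inter> I = {} \<or> - S \<inter> I = {}"
    using assms interior_subset
    by (intro connectedD[OF assms(1) open_interior]) (auto simp: open_Compl)
  then show ?thesis
    using assms(3) by blast
qed

lemma arc_interval_in_or_off_subfamily:
  assumes H: "Hausdorff_space X"
    and C: "arcs_meet_at_endpoints X C" "\<gamma> \<in> C"
    and D: "arcs_meet_at_endpoints X D"
    and sub: "curves_image D \<subseteq> curves_image C"
    and ab: "0 \<le> a" "b \<le> 1"
    and ends: "\<gamma> ` {a<..<b} \<inter> arc_ends D = {}"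
  shows "\<gamma> ` {a<..<b} \<subseteq> curves_image D \<or> \<gamma> ` {a<..<b} \<inter> curves_image D = {}"
proof -
  define S where "S = {s \<in> {0..1}. \<gamma> s \<in> curves_image D}"
  have "closedin (top_of_set {0..1}) S"
    using closedin_continuous_map_preimage[OF arcs_meet_at_endpointsD(2)[OF C]
        closedin_curves_image[OF H D]]
    by (simp add: S_def)
  then have "closed S"
    using closedin_closed_trans by blast
  moreover have "t \<in> interior S" if t: "t \<in> {a<..<b}" "t \<in> S" for t
  proof -
    obtain \<delta> u where "\<delta> \<in> D" "u \<in> {0..1}" "\<gamma> t = \<delta> u"
      using t(2) unfolding S_def curves_image_def by auto
    moreover have "\<gamma> t \<notin> arc_ends D" "\<delta> 0 \<in> arc_ends D" "\<delta> 1 \<in> arc_ends D"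
      using ends t(1) \<open>\<delta> \<in> D\<close> unfolding arc_ends_def by blast+
    ultimately have "u \<in> {0<..<1}"
      by (metis atLeastAtMost_iff greaterThanLessThan_iff order_less_le)
    then show ?thesis
      using mem_interior_preimage_subfamily[OF H C D \<open>\<delta> \<in> D\<close> sub] t ab \<open>\<gamma> t = \<delta> u\<close>
      unfolding S_def by auto
  qed
  ultimately have "{a<..<b} \<subseteq> S \<or> {a<..<b} \<inter> S = {}"
    by (intro connected_subset_or_disjoint) auto
  then show ?thesis
    using ab unfolding S_def by auto
qed

section \<open>Subdividing arcs at breakpoints\<close>

definition consecutive_in :: "real set \<Rightarrow> real \<Rightarrow> real \<Rightarrow> bool" where
  "consecutive_in F a b \<longleftrightarrow> a \<in> F \<and> b \<in> F \<and> a < b \<and> {a<..<b} \<inter> F = {}"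

lemma consecutive_in_cover:
  fixes F :: "real set"
  assumes "finite F" "0 \<in> F" "1 \<in> F" "x \<in> {0..1}"
  obtains a b where "consecutive_in F a b" "x \<in> {a..b}"
proof -
  define a where "a = Max {f \<in> F. f \<le> x \<and> f < 1}"
  have A: "finite {f \<in> F. f \<le> x \<and> f < 1}" "0 \<in> {f \<in> F. f \<le> x \<and> f < 1}"
    using assms by auto
  have a: "a \<in> F" "a \<le> x" "a < 1" "\<And>f. f \<in> F \<Longrightarrow> f \<le> x \<Longrightarrow> f < 1 \<Longrightarrow> f \<le> a"
    using Max_in[OF A(1)] Max_ge[OF A(1)] A(2) unfolding a_def by blast+
  define b where "b = Min {f \<in> F. a < f}"
  have B: "finite {f \<in> F. a < f}" "1 \<in> {f \<in> F. a < f}"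
    using assms a(3) by auto
  have b: "b \<in> F" "a < b" "\<And>f. f \<in> F \<Longrightarrow> a < f \<Longrightarrow> b \<le> f"
    using Min_in[OF B(1)] Min_le[OF B(1)] B(2) unfolding b_def by blast+
  have "x \<le> b"
  proof (rule ccontr)
    assume "\<not> x \<le> b"
    then show False
      using a(4)[OF b(1)] b(2) assms(4) by auto
  qed
  moreover have "{a<..<b} \<inter> F = {}"
    using b(3) by fastforce
  ultimately show thesis
    using a b by (intro that[of a b]) (auto simp: consecutive_in_def)
qed

lemma consecutive_in_overlap:
  assumes "consecutive_in F a b" "consecutive_in F a' b'" "(a, b) \<noteq> (a', b')"
    and "x \<in> {a..b}" "x \<in> {a'..b'}"
  shows "x = b \<and> x = a' \<or> x = a \<and> x = b'"
proof -
  have "a' \<notin> {a<..<b}" "a \<notin> {a'<..<b'}" "b \<notin> {a'<..<b'}" "b' \<notin> {a<..<b}"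
    using assms(1,2) unfolding consecutive_in_def by blast+
  then show ?thesis
    using assms unfolding consecutive_in_def by auto
qed

definition breakpoints :: "(real \<Rightarrow> 'a) \<Rightarrow> 'a set \<Rightarrow> real set" where
  "breakpoints \<gamma> E = {0, 1} \<union> {t \<in> {0<..<1}. \<gamma> t \<in> E}"

lemma finite_breakpoints:
  assumes "inj_on \<gamma> {0<..<1}" "finite E"
  shows "finite (breakpoints \<gamma> E)"
proof -
  have "{t \<in> {0<..<1}. \<gamma> t \<in> E} = \<gamma> -` E \<inter> {0<..<1}"
    by blast
  then show ?thesis
    using finite_vimage_IntI[OF assms(2,1)] unfolding breakpoints_def by simp
qed

lemma consecutive_in_breakpoints:
  assumes "consecutive_in (breakpoints \<gamma> E) a b"
  shows "0 \<le> a" "a < b" "b \<le> 1" "\<gamma> ` {a<..<b} \<inter> E = {}"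
proof -
  show "0 \<le> a" "a < b" "b \<le> 1"
    using assms unfolding consecutive_in_def breakpoints_def by auto
  then have "t \<in> breakpoints \<gamma> E" if "t \<in> {a<..<b}" "\<gamma> t \<in> E" for t
    using that unfolding breakpoints_def by auto
  then show "\<gamma> ` {a<..<b} \<inter> E = {}"
    using assms unfolding consecutive_in_def by blast
qed

definition subdivision :: "(real \<Rightarrow> 'a) set \<Rightarrow> 'a set \<Rightarrow> (real \<Rightarrow> 'a) set" where
  "subdivision C E = {subarc \<gamma> a b | \<gamma> a b. \<gamma> \<in> C \<and> consecutive_in (breakpoints \<gamma> E) a b}"

lemma subdivisionE:
  assumes "f \<in> subdivision C E"
  obtains \<gamma> a b where "\<gamma> \<in> C" "consecutive_in (breakpoints \<gamma> E) a b" "f = subarc \<gamma> a b"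
  using assms unfolding subdivision_def by blast

lemma finite_subdivision:
  assumes "finite C" "\<And>\<gamma>. \<gamma> \<in> C \<Longrightarrow> finite (breakpoints \<gamma> E)"
  shows "finite (subdivision C E)"
proof (rule finite_subset)
  show "subdivision C E \<subseteq> (\<lambda>(\<gamma>, a, b). subarc \<gamma> a b) ` (SIGMA \<gamma>:C. breakpoints \<gamma> E \<times> breakpoints \<gamma> E)"
  proof
    fix f assume "f \<in> subdivision C E"
    then obtain \<gamma> a b where "\<gamma> \<in> C" "consecutive_in (breakpoints \<gamma> E) a b" "f = subarc \<gamma> a b"
      by (rule subdivisionE)
    then show "f \<in> (\<lambda>(\<gamma>, a, b). subarc \<gamma> a b) ` (SIGMA \<gamma>:C. breakpoints \<gamma> E \<times> breakpoints \<gamma> E)"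
      by (intro image_eqI[of _ _ "(\<gamma>, a, b)"]) (auto simp: consecutive_in_def)
  qed
  show "finite \<dots>"
    using assms by auto
qed

lemma curves_image_subdivision:
  assumes "\<And>\<gamma>. \<gamma> \<in> C \<Longrightarrow> finite (breakpoints \<gamma> E)"
  shows "curves_image (subdivision C E) = curves_image C"
proof
  show "curves_image (subdivision C E) \<subseteq> curves_image C"
  proof
    fix p assume "p \<in> curves_image (subdivision C E)"
    then obtain f x where "f \<in> subdivision C E" "x \<in> {0..1}" "p = f x"
      unfolding curves_image_def by blast
    moreover from \<open>f \<in> subdivision C E\<close> obtain \<gamma> a b
      where "\<gamma> \<in> C" "consecutive_in (breakpoints \<gamma> E) a b" "f = subarc \<gamma> a b"
      by (rule subdivisionE)
    ultimately have "p \<in> \<gamma> ` {a..b}" "{a..b} \<subseteq> {0..1}"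
      using subarc_image[of a b \<gamma>] consecutive_in_breakpoints[of \<gamma> E a b] by auto
    then show "p \<in> curves_image C"
      unfolding curves_image_def using \<open>\<gamma> \<in> C\<close> by blast
  qed
  show "curves_image C \<subseteq> curves_image (subdivision C E)"
  proof
    fix p assume "p \<in> curves_image C"
    then obtain \<gamma> x where "\<gamma> \<in> C" "x \<in> {0..1}" "p = \<gamma> x"
      unfolding curves_image_def by blast
    moreover obtain a b where ab: "consecutive_in (breakpoints \<gamma> E) a b" "x \<in> {a..b}"
      using consecutive_in_cover[OF assms[OF \<open>\<gamma> \<in> C\<close>] _ _ \<open>x \<in> {0..1}\<close>]
      unfolding breakpoints_def by blast
    moreover have "subarc \<gamma> a b ` {0..1} = \<gamma> ` {a..b}"
      using ab(1) consecutive_in_breakpoints(2) subarc_image by (metis less_imp_le)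
    ultimately have "subarc \<gamma> a b \<in> subdivision C E" "p \<in> subarc \<gamma> a b ` {0..1}"
      unfolding subdivision_def by auto
    then show "p \<in> curves_image (subdivision C E)"
      unfolding curves_image_def by blast
  qed
qed

section \<open>Subdivision preserves cut families\<close>

definition ends_meet_in_distinct_directions ::
    "'a chart set \<Rightarrow> (real \<Rightarrow> 'a) \<Rightarrow> real \<Rightarrow> (real \<Rightarrow> 'a) \<Rightarrow> real \<Rightarrow> bool" where
  "ends_meet_in_distinct_directions A \<gamma> s \<delta> t \<longleftrightarrow>
     s \<in> {0, 1} \<and> t \<in> {0, 1} \<and>
     (\<forall>(U, \<phi>)\<in>A. \<gamma> s \<in> U \<longrightarrow> \<not> (\<exists>c>0. out_vel \<phi> \<gamma> s = c *\<^sub>R out_vel \<phi> \<delta> t))"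

definition meets_boundary_transversally ::
    "'a chart set \<Rightarrow> (real \<Rightarrow> 'a) \<Rightarrow> real \<Rightarrow> (real \<Rightarrow> 'a) \<Rightarrow> real \<Rightarrow> bool" where
  "meets_boundary_transversally A \<gamma> s \<beta> u \<longleftrightarrow>
     s \<in> {0, 1} \<and> (\<forall>(U, \<phi>)\<in>A. \<gamma> s \<in> U \<longrightarrow> lin_indep2 (chart_vel \<phi> \<gamma> s) (chart_vel \<phi> \<beta> u))"

lemma cut_family_iff:
  "cut_family X A M B C \<longleftrightarrow>
     finite C \<and> (\<forall>\<gamma>\<in>C. regular_C1_curve X A \<gamma> \<and> \<gamma> ` {0..1} \<subseteq> M) \<and>
     (\<forall>\<gamma>\<in>C. \<forall>\<delta>\<in>C. \<forall>s\<in>{0..1}. \<forall>t\<in>{0..1}.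
        \<gamma> s = \<delta> t \<and> (\<gamma>, s) \<noteq> (\<delta>, t) \<longrightarrow> ends_meet_in_distinct_directions A \<gamma> s \<delta> t) \<and>
     (\<forall>\<gamma>\<in>C. \<forall>\<beta>\<in>B. \<forall>s\<in>{0..1}. \<forall>u\<in>{0..1}.
        \<gamma> s = \<beta> u \<longrightarrow> meets_boundary_transversally A \<gamma> s \<beta> u)"
  unfolding cut_family_def ends_meet_in_distinct_directions_def meets_boundary_transversally_def ..

lemma cut_familyD:
  assumes "cut_family X A M B C"
  shows "finite C"
    and "\<gamma> \<in> C \<Longrightarrow> regular_C1_curve X A \<gamma>"
    and "\<gamma> \<in> C \<Longrightarrow> \<gamma> ` {0..1} \<subseteq> M"
    and "\<lbrakk>\<gamma> \<in> C; \<delta> \<in> C; s \<in> {0..1}; t \<in> {0..1}; \<gamma> s = \<delta> t; (\<gamma>, s) \<noteq> (\<delta>, t)\<rbrakk>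
           \<Longrightarrow> ends_meet_in_distinct_directions A \<gamma> s \<delta> t"
    and "\<lbrakk>\<gamma> \<in> C; \<beta> \<in> B; s \<in> {0..1}; u \<in> {0..1}; \<gamma> s = \<beta> u\<rbrakk>
           \<Longrightarrow> meets_boundary_transversally A \<gamma> s \<beta> u"
  using assms unfolding cut_family_iff by blast+

lemma cut_familyI:
  assumes "finite C"
    and "\<And>\<gamma>. \<gamma> \<in> C \<Longrightarrow> regular_C1_curve X A \<gamma> \<and> \<gamma> ` {0..1} \<subseteq> M"
    and "\<And>\<gamma> \<delta> s t. \<lbrakk>\<gamma> \<in> C; \<delta> \<in> C; s \<in> {0..1}; t \<in> {0..1}; \<gamma> s = \<delta> t; (\<gamma>, s) \<noteq> (\<delta>, t)\<rbrakk>
           \<Longrightarrow> ends_meet_in_distinct_directions A \<gamma> s \<delta> t"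
    and "\<And>\<gamma> \<beta> s u. \<lbrakk>\<gamma> \<in> C; \<beta> \<in> B; s \<in> {0..1}; u \<in> {0..1}; \<gamma> s = \<beta> u\<rbrakk>
           \<Longrightarrow> meets_boundary_transversally A \<gamma> s \<beta> u"
  shows "cut_family X A M B C"
  unfolding cut_family_iff using assms by blast

lemma cut_family_arcs_meet_at_endpoints:
  assumes "cut_family X A M B C"
  shows "arcs_meet_at_endpoints X C"
  unfolding arcs_meet_at_endpoints_def
proof (intro conjI ballI impI)
  show "finite C"
    using cut_familyD(1)[OF assms] .
  show "continuous_map (top_of_set {0..1}) X \<gamma>" if "\<gamma> \<in> C" for \<gamma>
    using cut_familyD(2)[OF assms that] unfolding regular_C1_curve_def by blast
  show "s \<in> {0, 1}" "t \<in> {0, 1}"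
    if "\<gamma> \<in> C" "\<delta> \<in> C" "s \<in> {0..1}" "t \<in> {0..1}" "\<gamma> s = \<delta> t \<and> (\<gamma>, s) \<noteq> (\<delta>, t)"
    for \<gamma> \<delta> s t
    using cut_familyD(4)[OF assms that(1-4)] that(5)
    unfolding ends_meet_in_distinct_directions_def by blast+
qed

lemma ex_pos_scaleR_cancel:
  fixes v w :: "'b::real_vector"
  assumes "p > 0" "q > 0"
  shows "(\<exists>c>0. p *\<^sub>R v = c *\<^sub>R (q *\<^sub>R w)) \<longleftrightarrow> (\<exists>c>0. v = c *\<^sub>R w)"
proof
  assume "\<exists>c>0. p *\<^sub>R v = c *\<^sub>R (q *\<^sub>R w)"
  then obtain c where "c > 0" and eq: "p *\<^sub>R v = c *\<^sub>R (q *\<^sub>R w)"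
    by blast
  have "v = inverse p *\<^sub>R (p *\<^sub>R v)"
    using assms by simp
  also have "\<dots> = (c * q / p) *\<^sub>R w"
    unfolding eq by (simp add: divide_inverse mult.commute)
  finally have "v = (c * q / p) *\<^sub>R w" .
  with \<open>c > 0\<close> assms show "\<exists>c>0. v = c *\<^sub>R w"
    by (intro exI[of _ "c * q / p"]) auto
next
  assume "\<exists>c>0. v = c *\<^sub>R w"
  then obtain c where "c > 0" "v = c *\<^sub>R w"
    by blast
  then have "p *\<^sub>R v = (p * c / q) *\<^sub>R (q *\<^sub>R w)"
    using assms by simp
  with \<open>c > 0\<close> assms show "\<exists>c>0. p *\<^sub>R v = c *\<^sub>R (q *\<^sub>R w)"
    by (intro exI[of _ "p * c / q"]) auto
qed

lemma not_ex_pos_scaleR_opposite: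
  fixes v :: "'b::real_vector"
  assumes "v \<noteq> 0" "p > 0" "q > 0"
  shows "\<not> (\<exists>c>0. - (p *\<^sub>R v) = c *\<^sub>R (q *\<^sub>R v))"
    and "\<not> (\<exists>c>0. p *\<^sub>R v = c *\<^sub>R - (q *\<^sub>R v))"
proof -
  have nz: "p *\<^sub>R v + c *\<^sub>R (q *\<^sub>R v) \<noteq> 0" if "c > 0" for c
  proof -
    have "p + c * q > 0"
      using assms that by (intro add_pos_pos mult_pos_pos)
    then have "(p + c * q) *\<^sub>R v \<noteq> 0"
      using assms(1) by simp
    then show ?thesis
      by (simp add: scaleR_add_left)
  qed
  show "\<not> (\<exists>c>0. - (p *\<^sub>R v) = c *\<^sub>R (q *\<^sub>R v))"
  proof
    assume "\<exists>c>0. - (p *\<^sub>R v) = c *\<^sub>R (q *\<^sub>R v)"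
    then obtain c where "c > 0" and eq: "- (p *\<^sub>R v) = c *\<^sub>R (q *\<^sub>R v)"
      by blast
    from nz[OF \<open>c > 0\<close>] show False
      unfolding eq[symmetric] by simp
  qed
  show "\<not> (\<exists>c>0. p *\<^sub>R v = c *\<^sub>R - (q *\<^sub>R v))"
  proof
    assume "\<exists>c>0. p *\<^sub>R v = c *\<^sub>R - (q *\<^sub>R v)"
    then obtain c where "c > 0" and eq: "p *\<^sub>R v = c *\<^sub>R - (q *\<^sub>R v)"
      by blast
    from nz[OF \<open>c > 0\<close>] show False
      unfolding eq by simp
  qed
qed

lemma lin_indep2_scaleR_left:
  assumes "k \<noteq> 0"
  shows "lin_indep2 (k *\<^sub>R v) w \<longleftrightarrow> lin_indep2 v w"
proof -
  have "(k * v$1) * w$2 - (k * v$2) * w$1 = k * (v$1 * w$2 - v$2 * w$1)"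
    by (simp add: algebra_simps)
  then show ?thesis
    using assms unfolding lin_indep2_def by simp
qed

lemma out_vel_subarc:
  assumes "regular_C1_curve X A \<gamma>" "(U, \<phi>) \<in> A" "0 \<le> a" "a < b" "b \<le> 1"
    and "s \<in> {0..1}" "\<gamma> (a + (b - a) * s) \<in> U"
  shows "out_vel \<phi> (subarc \<gamma> a b) s =
    (b - a) *\<^sub>R (if s = 0 then chart_vel \<phi> \<gamma> (a + (b - a) * s) else - chart_vel \<phi> \<gamma> (a + (b - a) * s))"
  unfolding out_vel_def chart_vel_subarc[OF assms] by simp

lemma ends_meet_in_distinct_directions_subarc:
  assumes \<gamma>: "regular_C1_curve X A \<gamma>" and \<delta>: "regular_C1_curve X A \<delta>"
    and ab: "0 \<le> a" "a < b" "b \<le> 1" and ab': "0 \<le> a'" "a' < b'" "b' \<le> 1"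
    and st: "s \<in> {0..1}" "t \<in> {0..1}"
    and meet: "\<gamma> (a + (b - a) * s) = \<delta> (a' + (b' - a') * t)"
    and ends: "ends_meet_in_distinct_directions A \<gamma> (a + (b - a) * s) \<delta> (a' + (b' - a') * t)"
  shows "ends_meet_in_distinct_directions A (subarc \<gamma> a b) s (subarc \<delta> a' b') t"
proof -
  have x: "a + (b - a) * s \<in> {0, 1}" and y: "a' + (b' - a') * t \<in> {0, 1}"
    using ends unfolding ends_meet_in_distinct_directions_def by auto
  have sx: "a + (b - a) * s = s" and ty: "a' + (b' - a') * t = t"
    using affine_unit_interval_endpoint[OF ab st(1) x] affine_unit_interval_endpoint[OF ab' st(2) y] .
  have "\<not> (\<exists>c>0. out_vel \<phi> (subarc \<gamma> a b) s = c *\<^sub>R out_vel \<phi> (subarc \<delta> a' b') t)"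
    if U: "(U, \<phi>) \<in> A" "subarc \<gamma> a b s \<in> U" for U \<phi>
  proof -
    have "\<gamma> s \<in> U" "\<delta> t \<in> U"
      using U(2) meet unfolding subarc_def sx ty by simp_all
    then have "out_vel \<phi> (subarc \<gamma> a b) s = (b - a) *\<^sub>R out_vel \<phi> \<gamma> s"
        "out_vel \<phi> (subarc \<delta> a' b') t = (b' - a') *\<^sub>R out_vel \<phi> \<delta> t"
      using out_vel_subarc[OF \<gamma> U(1) ab st(1), unfolded sx]
        out_vel_subarc[OF \<delta> U(1) ab' st(2), unfolded ty]
      by (simp_all add: out_vel_def)
    moreover have "\<not> (\<exists>c>0. out_vel \<phi> \<gamma> s = c *\<^sub>R out_vel \<phi> \<delta> t)"
      using ends U(1) \<open>\<gamma> s \<in> U\<close> unfolding ends_meet_in_distinct_directions_def sx ty by fast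
    ultimately show ?thesis
      using ex_pos_scaleR_cancel[of "b - a" "b' - a'" "out_vel \<phi> \<gamma> s" "out_vel \<phi> \<delta> t"] ab(2) ab'(2)
      by (metis diff_gt_0_iff_gt)
  qed
  with x y show ?thesis
    unfolding ends_meet_in_distinct_directions_def sx ty by blast
qed

lemma adjacent_subarcs_ends_meet_in_distinct_directions:
  assumes \<gamma>: "regular_C1_curve X A \<gamma>" and abc: "0 \<le> a" "a < b" "b < c" "c \<le> 1"
  shows "ends_meet_in_distinct_directions A (subarc \<gamma> a b) 1 (subarc \<gamma> b c) 0"
    and "ends_meet_in_distinct_directions A (subarc \<gamma> b c) 0 (subarc \<gamma> a b) 1"
proof -
  have "b \<in> {0..1}"
    using abc by auto
  have "\<not> (\<exists>k>0. out_vel \<phi> (subarc \<gamma> a b) 1 = k *\<^sub>R out_vel \<phi> (subarc \<gamma> b c) 0)"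
    "\<not> (\<exists>k>0. out_vel \<phi> (subarc \<gamma> b c) 0 = k *\<^sub>R out_vel \<phi> (subarc \<gamma> a b) 1)"
    if U: "(U, \<phi>) \<in> A" "\<gamma> b \<in> U" for U \<phi>
  proof -
    have "out_vel \<phi> (subarc \<gamma> a b) 1 = - ((b - a) *\<^sub>R chart_vel \<phi> \<gamma> b)"
      "out_vel \<phi> (subarc \<gamma> b c) 0 = (c - b) *\<^sub>R chart_vel \<phi> \<gamma> b"
      using out_vel_subarc[OF \<gamma> U(1), of a b 1] out_vel_subarc[OF \<gamma> U(1), of b c 0] U(2) abc
      by auto
    moreover have "chart_vel \<phi> \<gamma> b \<noteq> 0"
      using regular_C1_curveD(2)[OF \<gamma> U(1) \<open>b \<in> {0..1}\<close> U(2)] .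
    ultimately show "\<not> (\<exists>k>0. out_vel \<phi> (subarc \<gamma> a b) 1 = k *\<^sub>R out_vel \<phi> (subarc \<gamma> b c) 0)"
      "\<not> (\<exists>k>0. out_vel \<phi> (subarc \<gamma> b c) 0 = k *\<^sub>R out_vel \<phi> (subarc \<gamma> a b) 1)"
      using not_ex_pos_scaleR_opposite[of "chart_vel \<phi> \<gamma> b" "b - a" "c - b"]
        not_ex_pos_scaleR_opposite[of "chart_vel \<phi> \<gamma> b" "c - b" "b - a"] abc
      by simp_all
  qed
  moreover have "subarc \<gamma> a b 1 = \<gamma> b" "subarc \<gamma> b c 0 = \<gamma> b"
    unfolding subarc_def by simp_all
  ultimately show "ends_meet_in_distinct_directions A (subarc \<gamma> a b) 1 (subarc \<gamma> b c) 0"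
    and "ends_meet_in_distinct_directions A (subarc \<gamma> b c) 0 (subarc \<gamma> a b) 1"
    unfolding ends_meet_in_distinct_directions_def by auto
qed

lemma meets_boundary_transversally_subarc:
  assumes \<gamma>: "regular_C1_curve X A \<gamma>" and ab: "0 \<le> a" "a < b" "b \<le> 1" and s: "s \<in> {0..1}"
    and meet: "meets_boundary_transversally A \<gamma> (a + (b - a) * s) \<beta> u"
  shows "meets_boundary_transversally A (subarc \<gamma> a b) s \<beta> u"
proof -
  have x: "a + (b - a) * s \<in> {0, 1}"
    using meet unfolding meets_boundary_transversally_def by auto
  have sx: "a + (b - a) * s = s"
    using affine_unit_interval_endpoint[OF ab s x] .
  have "lin_indep2 (chart_vel \<phi> (subarc \<gamma> a b) s) (chart_vel \<phi> \<beta> u)"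
    if U: "(U, \<phi>) \<in> A" "subarc \<gamma> a b s \<in> U" for U \<phi>
  proof -
    have "\<gamma> s \<in> U"
      using U(2) unfolding subarc_def sx .
    then show ?thesis
      using meet U(1) chart_vel_subarc[OF \<gamma> U(1) ab s, unfolded sx] lin_indep2_scaleR_left[of "b - a"] ab(2)
      unfolding meets_boundary_transversally_def sx by auto
  qed
  with x show ?thesis
    unfolding meets_boundary_transversally_def sx by blast
qed

lemma subdivision_ends_meet_in_distinct_directions:
  assumes C: "cut_family X A M B C"
    and f: "f \<in> subdivision C E" and g: "g \<in> subdivision C E"
    and st: "s \<in> {0..1}" "t \<in> {0..1}" and "f s = g t" "(f, s) \<noteq> (g, t)"
  shows "ends_meet_in_distinct_directions A f s g t"
proof -
  obtain \<gamma> a b where \<gamma>: "\<gamma> \<in> C" "consecutive_in (breakpoints \<gamma> E) a b" "f = subarc \<gamma> a b"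
    using f by (rule subdivisionE)
  obtain \<delta> a' b' where \<delta>: "\<delta> \<in> C" "consecutive_in (breakpoints \<delta> E) a' b'" "g = subarc \<delta> a' b'"
    using g by (rule subdivisionE)
  note ab = consecutive_in_breakpoints(1-3)[OF \<gamma>(2)]
    and ab' = consecutive_in_breakpoints(1-3)[OF \<delta>(2)]
  have reg: "regular_C1_curve X A \<gamma>" "regular_C1_curve X A \<delta>"
    using cut_familyD(2)[OF C] \<gamma>(1) \<delta>(1) by blast+
  define x y where "x = a + (b - a) * s" and "y = a' + (b' - a') * t"
  have meet: "\<gamma> x = \<delta> y"
    using \<open>f s = g t\<close> \<gamma>(3) \<delta>(3) by (simp add: subarc_def x_def y_def)
  have "x \<in> (\<lambda>s. a + (b - a) * s) ` {0..1}" "y \<in> (\<lambda>t. a' + (b' - a') * t) ` {0..1}"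
    using st unfolding x_def y_def by auto
  then have "x \<in> {a..b}" "y \<in> {a'..b'}"
    using affine_unit_interval_image ab(2) ab'(2) by (metis less_imp_le)+
  with ab ab' have x: "x \<in> {a..b}" "x \<in> {0..1}" and y: "y \<in> {a'..b'}" "y \<in> {0..1}"
    by auto
  show ?thesis
  proof (cases "(\<gamma>, x) = (\<delta>, y)")
    case False
    then have "ends_meet_in_distinct_directions A \<gamma> x \<delta> y"
      using cut_familyD(4)[OF C \<gamma>(1) \<delta>(1) x(2) y(2) meet] by simp
    then show ?thesis
      using ends_meet_in_distinct_directions_subarc[OF reg ab ab' st] meet \<gamma>(3) \<delta>(3)
      unfolding x_def y_def by simp
  next
    case True
    then have "\<delta> = \<gamma>" "y = x"
      by simp_all
    have "(a, b) \<noteq> (a', b')"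
    proof
      assume "(a, b) = (a', b')"
      then have "s = t"
        using \<open>y = x\<close> ab(2) by (simp add: x_def y_def)
      with \<open>(f, s) \<noteq> (g, t)\<close> \<gamma>(3) \<delta>(3) \<open>\<delta> = \<gamma>\<close> \<open>(a, b) = (a', b')\<close> show False
        by simp
    qed
    with \<gamma>(2) \<delta>(2) x(1) y(1) have "x = b \<and> x = a' \<or> x = a \<and> x = b'"
      using consecutive_in_overlap unfolding \<open>\<delta> = \<gamma>\<close> \<open>y = x\<close> by blast
    then show ?thesis
    proof
      assume "x = b \<and> x = a'"
      then have "a + (b - a) * s = b" "a' + (b' - a') * t = a'" "a' = b"
        using \<open>y = x\<close> unfolding x_def y_def by auto
      then have "s = 1" "t = 0" "a' = b"
        using affine_unit_interval_eq_endpoints ab(2) ab'(2) by blast+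
      then show ?thesis
        using adjacent_subarcs_ends_meet_in_distinct_directions(1)[OF reg(1) ab(1,2) _ ab'(3)] ab'(2)
        unfolding \<gamma>(3) \<delta>(3) \<open>\<delta> = \<gamma>\<close> by simp
    next
      assume "x = a \<and> x = b'"
      then have "a + (b - a) * s = a" "a' + (b' - a') * t = b'" "b' = a"
        using \<open>y = x\<close> unfolding x_def y_def by auto
      then have "s = 0" "t = 1" "b' = a"
        using affine_unit_interval_eq_endpoints ab(2) ab'(2) by blast+
      then show ?thesis
        using adjacent_subarcs_ends_meet_in_distinct_directions(2)[OF reg(1) ab'(1,2) _ ab(3)] ab(2)
        unfolding \<gamma>(3) \<delta>(3) \<open>\<delta> = \<gamma>\<close> by simp
    qed
  qed
qed

lemma cut_family_subdivision:
  assumes C: "cut_family X A M B C" and "finite E"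
  shows "cut_family X A M B (subdivision C E)"
    and "curves_image (subdivision C E) = curves_image C"
proof -
  note reg = cut_familyD(2,3)[OF C]
  have fin: "finite (breakpoints \<gamma> E)" if "\<gamma> \<in> C" for \<gamma>
    using finite_breakpoints[OF arcs_meet_at_endpoints_inj_on[OF cut_family_arcs_meet_at_endpoints[OF C] that]
        \<open>finite E\<close>] .
  then show "curves_image (subdivision C E) = curves_image C"
    by (rule curves_image_subdivision)
  show "cut_family X A M B (subdivision C E)"
  proof (rule cut_familyI)
    show "finite (subdivision C E)"
      using finite_subdivision[OF cut_familyD(1)[OF C] fin] .
  next
    fix f assume "f \<in> subdivision C E"
    then obtain \<gamma> a b where \<gamma>: "\<gamma> \<in> C" "consecutive_in (breakpoints \<gamma> E) a b" "f = subarc \<gamma> a b"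
      by (rule subdivisionE)
    note ab = consecutive_in_breakpoints(1-3)[OF \<gamma>(2)]
    have "f ` {0..1} \<subseteq> \<gamma> ` {0..1}"
      using subarc_image[of a b \<gamma>] ab unfolding \<gamma>(3) by auto
    then show "regular_C1_curve X A f \<and> f ` {0..1} \<subseteq> M"
      using regular_C1_curve_subarc[OF reg(1)[OF \<gamma>(1)] ab] reg(2)[OF \<gamma>(1)] \<gamma>(3) by blast
  next
    fix f g s t
    assume "f \<in> subdivision C E" "g \<in> subdivision C E" "s \<in> {0..1}" "t \<in> {0..1}"
      "f s = g t" "(f, s) \<noteq> (g, t)"
    then show "ends_meet_in_distinct_directions A f s g t"
      by (rule subdivision_ends_meet_in_distinct_directions[OF C])
  next
    fix f \<beta> s u
    assume f: "f \<in> subdivision C E" and "\<beta> \<in> B" "s \<in> {0..1}" "u \<in> {0..1}" "f s = \<beta> u"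
    obtain \<gamma> a b where \<gamma>: "\<gamma> \<in> C" "consecutive_in (breakpoints \<gamma> E) a b" "f = subarc \<gamma> a b"
      using f by (rule subdivisionE)
    note ab = consecutive_in_breakpoints(1-3)[OF \<gamma>(2)]
    have "a + (b - a) * s \<in> {0..1}" "\<gamma> (a + (b - a) * s) = \<beta> u"
      using affine_unit_interval_mem[of a b s] ab \<open>s \<in> {0..1}\<close> \<open>f s = \<beta> u\<close> \<gamma>(3)
      by (auto simp: subarc_def)
    then have "meets_boundary_transversally A \<gamma> (a + (b - a) * s) \<beta> u"
      using cut_familyD(5)[OF C \<gamma>(1) \<open>\<beta> \<in> B\<close> _ \<open>u \<in> {0..1}\<close>] by blast
    then show "meets_boundary_transversally A f s \<beta> u"
      unfolding \<gamma>(3) by (rule meets_boundary_transversally_subarc[OF reg(1)[OF \<gamma>(1)] ab \<open>s \<in> {0..1}\<close>])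
  qed
qed

section \<open>The trichotomy\<close>

lemma closure_of_trichotomy:
  assumes "closedin X \<Gamma>1" "closedin X \<Gamma>2" "S \<subseteq> X closure_of T" "T \<noteq> {}" "T \<subseteq> \<Gamma>1 \<union> \<Gamma>2"
    and "T \<subseteq> \<Gamma>1 \<or> T \<inter> \<Gamma>1 = {}" "T \<subseteq> \<Gamma>2 \<or> T \<inter> \<Gamma>2 = {}"
  shows "S \<subseteq> X closure_of (\<Gamma>1 - \<Gamma>2) \<or> S \<subseteq> X closure_of (\<Gamma>2 - \<Gamma>1) \<or> S \<subseteq> \<Gamma>1 \<inter> \<Gamma>2"
proof -
  consider "T \<subseteq> \<Gamma>1 - \<Gamma>2" | "T \<subseteq> \<Gamma>2 - \<Gamma>1" | "T \<subseteq> \<Gamma>1 \<inter> \<Gamma>2"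
    using assms(4-7) by blast
  then show ?thesis
  proof cases
    case 1
    then have "X closure_of T \<subseteq> X closure_of (\<Gamma>1 - \<Gamma>2)"
      by (rule closure_of_mono)
    with assms(3) show ?thesis
      by blast
  next
    case 2
    then have "X closure_of T \<subseteq> X closure_of (\<Gamma>2 - \<Gamma>1)"
      by (rule closure_of_mono)
    with assms(3) show ?thesis
      by blast
  next
    case 3
    then have "X closure_of T \<subseteq> \<Gamma>1 \<inter> \<Gamma>2"
      using assms(1,2) by (intro closure_of_minimal closedin_Int)
    with assms(3) show ?thesis
      by blast
  qed
qed

lemma image_subset_closure_of_open_interval:
  fixes \<gamma> :: "real \<Rightarrow> 'a"
  assumes "continuous_map (top_of_set {0..1}) X \<gamma>" "0 \<le> a" "a < b" "b \<le> 1"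
  shows "\<gamma> ` {a..b} \<subseteq> X closure_of (\<gamma> ` {a<..<b})"
proof -
  have "top_of_set {0..1} closure_of {a<..<b} = {a..b}"
    using assms(2-4) by (simp add: closure_of_subtopology Int_absorb1 subset_iff)
  then show ?thesis
    using continuous_map_image_closure_subset[OF assms(1), of "{a<..<b}"] by simp
qed

lemma subdivision_trichotomy:
  assumes H: "Hausdorff_space X" and C: "arcs_meet_at_endpoints X C"
    and C1: "arcs_meet_at_endpoints X C1" and C2: "arcs_meet_at_endpoints X C2"
    and union: "curves_image C = curves_image C1 \<union> curves_image C2"
    and f: "f \<in> subdivision C (arc_ends (C1 \<union> C2))"
  shows "f ` {0..1} \<subseteq> X closure_of (curves_image C1 - curves_image C2) \<or>
         f ` {0..1} \<subseteq> X closure_of (curves_image C2 - curves_image C1) \<or>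
         f ` {0..1} \<subseteq> curves_image C1 \<inter> curves_image C2"
proof -
  obtain \<gamma> a b where \<gamma>: "\<gamma> \<in> C" "consecutive_in (breakpoints \<gamma> (arc_ends (C1 \<union> C2))) a b"
      "f = subarc \<gamma> a b"
    using f by (rule subdivisionE)
  note ab = consecutive_in_breakpoints[OF \<gamma>(2)]
  have "arc_ends (C1 \<union> C2) = arc_ends C1 \<union> arc_ends C2"
    unfolding arc_ends_def by blast
  then have ends: "\<gamma> ` {a<..<b} \<inter> arc_ends C1 = {}" "\<gamma> ` {a<..<b} \<inter> arc_ends C2 = {}"
    using ab(4) by blast+
  have "curves_image C1 \<subseteq> curves_image C" "curves_image C2 \<subseteq> curves_image C"
    using union by blast+
  note in_or_off = arc_interval_in_or_off_subfamily[OF H C \<gamma>(1) C1 this(1) ab(1,3) ends(1)]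
    arc_interval_in_or_off_subfamily[OF H C \<gamma>(1) C2 this(2) ab(1,3) ends(2)]
  have closure: "f ` {0..1} \<subseteq> X closure_of (\<gamma> ` {a<..<b})"
    using image_subset_closure_of_open_interval[OF arcs_meet_at_endpointsD(2)[OF C \<gamma>(1)] ab(1-3)]
      subarc_image[of a b \<gamma>] ab(2) \<gamma>(3) by simp
  have "\<gamma> ` {a<..<b} \<subseteq> \<gamma> ` {0..1}"
    using ab(1,3) by (intro image_mono) auto
  also have "\<dots> \<subseteq> curves_image C"
    using \<gamma>(1) unfolding curves_image_def by (rule UN_upper)
  finally have covered: "\<gamma> ` {a<..<b} \<subseteq> curves_image C1 \<union> curves_image C2"
    unfolding union .
  have "\<gamma> ` {a<..<b} \<noteq> {}"
    using ab(2) by simp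
  from closure_of_trichotomy[OF closedin_curves_image[OF H C1] closedin_curves_image[OF H C2]
      closure this covered in_or_off]
  show ?thesis .
qed

lemma surface_pw_C1_boundary_Hausdorff:
  "surface_pw_C1_boundary X A M B \<Longrightarrow> Hausdorff_space X"
  unfolding surface_pw_C1_boundary_def oriented_C1_surface_def by (elim conjE)

lemma compatible_cutsE:
  assumes "compatible_cuts X A M B \<Gamma>1 \<Gamma>2"
  obtains C1 C2 C where "cut_family X A M B C1" "\<Gamma>1 = curves_image C1"
    and "cut_family X A M B C2" "\<Gamma>2 = curves_image C2"
    and "cut_family X A M B C" "curves_image C = curves_image C1 \<union> curves_image C2"
proof -
  have pw: "pw_C1_cut X A M B \<Gamma>1" "pw_C1_cut X A M B \<Gamma>2" "pw_C1_cut X A M B (\<Gamma>1 \<union> \<Gamma>2)"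
    using assms unfolding compatible_cuts_def by blast+
  obtain C1 where C1: "cut_family X A M B C1" "\<Gamma>1 = curves_image C1"
    using pw(1) unfolding pw_C1_cut_def curves_image_def by blast
  obtain C2 where C2: "cut_family X A M B C2" "\<Gamma>2 = curves_image C2"
    using pw(2) unfolding pw_C1_cut_def curves_image_def by blast
  obtain C where C: "cut_family X A M B C" "\<Gamma>1 \<union> \<Gamma>2 = curves_image C"
    using pw(3) unfolding pw_C1_cut_def curves_image_def by blast
  from C(2) C1(2) C2(2) have "curves_image C = curves_image C1 \<union> curves_image C2"
    by simp
  with C1 C2 C(1) show thesis
    by (rule that)
qed

theorem lemma3p4:
  fixes X :: "'a topology" and A :: "'a chart set" and M :: "'a set"
    and B :: "(real \<Rightarrow> 'a) set" and \<Gamma>1 \<Gamma>2 :: "'a set"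
  assumes "surface_pw_C1_boundary X A M B"
    and "compatible_cuts X A M B \<Gamma>1 \<Gamma>2"
  shows "\<exists>C. cut_family X A M B C \<and> (\<Union>\<gamma>\<in>C. \<gamma> ` {0..1}) = \<Gamma>1 \<union> \<Gamma>2 \<and>
           (\<forall>\<gamma>\<in>C. \<gamma> ` {0..1} \<subseteq> X closure_of (\<Gamma>1 - \<Gamma>2) \<or>
                    \<gamma> ` {0..1} \<subseteq> X closure_of (\<Gamma>2 - \<Gamma>1) \<or>
                    \<gamma> ` {0..1} \<subseteq> \<Gamma>1 \<inter> \<Gamma>2)"
proof -
  have H: "Hausdorff_space X"
    using surface_pw_C1_boundary_Hausdorff[OF assms(1)] .
  obtain C1 C2 C where C1: "cut_family X A M B C1" "\<Gamma>1 = curves_image C1"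
    and C2: "cut_family X A M B C2" "\<Gamma>2 = curves_image C2"
    and C: "cut_family X A M B C" and union: "curves_image C = curves_image C1 \<union> curves_image C2"
    using assms(2) by (rule compatible_cutsE)
  define E where "E = arc_ends (C1 \<union> C2)"
  have "finite E"
    using cut_familyD(1)[OF C1(1)] cut_familyD(1)[OF C2(1)] by (simp add: E_def arc_ends_def)
  note arcs = cut_family_arcs_meet_at_endpoints
  show ?thesis
  proof (intro exI[of _ "subdivision C E"] conjI ballI)
    show "cut_family X A M B (subdivision C E)"
      using cut_family_subdivision(1)[OF C \<open>finite E\<close>] .
    show "(\<Union>\<gamma>\<in>subdivision C E. \<gamma> ` {0..1}) = \<Gamma>1 \<union> \<Gamma>2"
      using cut_family_subdivision(2)[OF C \<open>finite E\<close>] union C1(2) C2(2)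
      unfolding curves_image_def by simp
    show "f ` {0..1} \<subseteq> X closure_of (\<Gamma>1 - \<Gamma>2) \<or> f ` {0..1} \<subseteq> X closure_of (\<Gamma>2 - \<Gamma>1) \<or>
        f ` {0..1} \<subseteq> \<Gamma>1 \<inter> \<Gamma>2" if "f \<in> subdivision C E" for f
      unfolding C1(2) C2(2)
      by (rule subdivision_trichotomy[OF H arcs[OF C] arcs[OF C1(1)] arcs[OF C2(1)] union
            that[unfolded E_def]])
  qed
qed

end
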